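(* Let $\tau$ and $\tau'$ be topologies on a set $X$ such that $(X,\tau)$ is quasi-Polish, $(X,\tau')$ is separable and metrizable, and $\tau\subseteq\tau'\subseteq\mathbf{\Sigma}^0_2(X,\tau)$. Then $(X,\tau')$ is Polish.
   Context: $\mathbf{\Sigma}^0_2(X,\tau)$ is the family of all sets of the form $\bigcup_{i\in\omega}(U_i\setminus V_i)$ with $U_i,V_i\in\tau$. A quasi-metric on a set $X$ is a function $d\colon X\times X\to[0,\infty)$ with $x=y$ iff $d(x,y)=d(y,x)=0$ and $d(x,z)\le d(x,y)+d(y,z)$; it induces the topology generated by $B_d(x,\varepsilon)=\{y\mid d(x,y)<\varepsilon\}$; $\widehat d(x,y)=\max\{d(x,y),d(y,x)\}$. $(x_n)$ is Cauchy if for every $\varepsilon>0$ there is $n_0$ with $d(x_n,x_m)<\varepsilon$ for all $m\ge n\ge n_0$; $d$ is complete if every Cauchy sequence converges in the topology of $\widehat d$. A space is quasi-Polish if it is countably based and its topology is induced by a complete quasi-metric. *)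

theory Defs
  imports "HOL-Analysis.Analysis"
begin

definition quasi_metric :: "'a set \<Rightarrow> ('a \<Rightarrow> 'a \<Rightarrow> real) \<Rightarrow> bool" where
  "quasi_metric X d \<longleftrightarrow>
     (\<forall>x\<in>X. \<forall>y\<in>X. 0 \<le> d x y) \<and>
     (\<forall>x\<in>X. \<forall>y\<in>X. (x = y \<longleftrightarrow> d x y = 0 \<and> d y x = 0)) \<and>
     (\<forall>x\<in>X. \<forall>y\<in>X. \<forall>z\<in>X. d x z \<le> d x y + d y z)"

definition qball :: "'a set \<Rightarrow> ('a \<Rightarrow> 'a \<Rightarrow> real) \<Rightarrow> 'a \<Rightarrow> real \<Rightarrow> 'a set" where
  "qball X d x e = {y \<in> X. d x y < e}"

definition qmtopology :: "'a set \<Rightarrow> ('a \<Rightarrow> 'a \<Rightarrow> real) \<Rightarrow> 'a topology" where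
  "qmtopology X d = topology_generated_by {qball X d x e | x e. x \<in> X \<and> e > 0}"

definition dhat :: "('a \<Rightarrow> 'a \<Rightarrow> real) \<Rightarrow> 'a \<Rightarrow> 'a \<Rightarrow> real" where
  "dhat d x y = max (d x y) (d y x)"

definition qcauchy :: "('a \<Rightarrow> 'a \<Rightarrow> real) \<Rightarrow> (nat \<Rightarrow> 'a) \<Rightarrow> bool" where
  "qcauchy d xs \<longleftrightarrow> (\<forall>\<epsilon>>0. \<exists>n0. \<forall>n m. n0 \<le> n \<and> n \<le> m \<longrightarrow> d (xs n) (xs m) < \<epsilon>)"

definition qcomplete :: "'a set \<Rightarrow> ('a \<Rightarrow> 'a \<Rightarrow> real) \<Rightarrow> bool" where
  "qcomplete X d \<longleftrightarrow>
     (\<forall>xs. range xs \<subseteq> X \<and> qcauchy d xs \<longrightarrow> (\<exists>x\<in>X. (\<lambda>n. dhat d x (xs n)) \<longlonglongrightarrow> 0))"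

definition quasi_Polish :: "'a topology \<Rightarrow> bool" where
  "quasi_Polish T \<longleftrightarrow> second_countable T \<and>
     (\<exists>d. quasi_metric (topspace T) d \<and> qcomplete (topspace T) d \<and> T = qmtopology (topspace T) d)"

definition Polish_space :: "'a topology \<Rightarrow> bool" where
  "Polish_space T \<longleftrightarrow> separable_space T \<and> completely_metrizable_space T"

definition Sigma02 :: "'a topology \<Rightarrow> 'a set set" where
  "Sigma02 T = {A. \<exists>U V. (\<forall>i::nat. openin T (U i) \<and> openin T (V i)) \<and> A = (\<Union>i. U i - V i)}"

end

theory Submission
  imports Defs
begin

text \<open>Embed \<open>(X, \<tau>')\<close> isometrically into the completion \<open>Z\<close> of a compatible metric via \<open>g\<close>; since
  a \<open>G\<^sub>\<delta>\<close> subspace of a completely metrizable space is completely metrizable, it suffices that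
  \<open>g ` X\<close> is \<open>G\<^sub>\<delta>\<close> in \<open>Z\<close>. For \<open>A \<subseteq> X\<close> let \<open>E(A)\<close> be the largest open subset of \<open>Z\<close> whose
  preimage under \<open>g\<close> lies in \<open>A\<close>; for fixed \<open>y\<close> the sets \<open>A\<close> with \<open>y \<in> E(A)\<close> form a filter.
  The image \<open>g ` X\<close> is cut out of its closure by countably many \<open>G\<^sub>\<delta>\<close> conditions on \<open>y\<close>:
  whenever a basic \<open>\<tau>\<close>-open set (cut down by one of countably many \<open>\<tau>\<close>-open sets) is in the
  filter, so is a basic set lying in an arbitrarily small quasi-metric ball inside it; and for each
  basic \<open>\<tau>'\<close>-open \<open>P = (\<Union>i. U\<^sub>i - V\<^sub>i)\<close>, if \<open>U\<^sub>i\<close> is in the filter then so is \<open>P\<close> or \<open>V\<^sub>i\<close>.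
  The first condition produces nested balls whose centres form a Cauchy sequence; by completeness
  its limit \<open>c\<close> has every \<open>\<tau>\<close>-neighbourhood in the filter, the second condition lifts this to
  every \<open>\<tau>'\<close>-neighbourhood, and then \<open>y = g c\<close> because \<open>Z\<close> is Hausdorff.\<close>

lemma (in Metric_space) separable_space_imp_second_countable:
  assumes "separable_space mtopology"
  shows "second_countable mtopology"
proof -
  obtain C where "countable C" and C: "mtopology closure_of C = M"
    using assms unfolding separable_space_def by auto
  define \<B> where "\<B> = (\<lambda>(a, n). mball a (1 / real (Suc n))) ` (C \<times> UNIV)"
  have "countable \<B>"
    unfolding \<B>_def using \<open>countable C\<close> by (intro countable_image countable_SIGMA) auto
  moreover have "\<forall>B\<in>\<B>. openin mtopology B"
    unfolding \<B>_def by (simp add: split_def)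
  moreover have "\<exists>B\<in>\<B>. x \<in> B \<and> B \<subseteq> W" if "openin mtopology W" "x \<in> W" for W x
  proof -
    have "x \<in> M" and "\<exists>r>0. mball x r \<subseteq> W"
      using that unfolding openin_mtopology by auto
    then obtain r where "0 < r" and r: "mball x r \<subseteq> W" by blast
    obtain n where n: "1 / real (Suc n) < r / 2"
      using reals_Archimedean[of "r / 2"] \<open>0 < r\<close> by (auto simp: inverse_eq_divide)
    have "x \<in> mtopology closure_of C" "x \<in> mball x (1 / real (Suc n))"
      using C \<open>x \<in> M\<close> by auto
    then obtain a where "a \<in> C" and a: "a \<in> mball x (1 / real (Suc n))"
      unfolding in_closure_of using openin_mball by blast
    have "mball a (1 / real (Suc n)) \<subseteq> mball x r"
      by (rule mball_subset) (use a n \<open>x \<in> M\<close> in \<open>auto simp: commute\<close>)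
    moreover have "x \<in> mball a (1 / real (Suc n))"
      using a \<open>x \<in> M\<close> by (auto simp: commute)
    moreover have "mball a (1 / real (Suc n)) \<in> \<B>"
      unfolding \<B>_def using \<open>a \<in> C\<close> by (intro image_eqI[of _ _ "(a, n)"]) auto
    ultimately show ?thesis
      using r by blast
  qed
  ultimately show ?thesis
    unfolding second_countable_def by blast
qed

lemma Sigma02_choice:
  assumes "\<forall>P\<in>\<P>. P \<in> Sigma02 T"
  shows "\<exists>U V :: 'a set \<Rightarrow> nat \<Rightarrow> 'a set. \<forall>P\<in>\<P>.
           (\<forall>i. openin T (U P i) \<and> openin T (V P i)) \<and> P = (\<Union>i. U P i - V P i)"
proof -
  have "\<forall>P\<in>\<P>. \<exists>UV. (\<forall>i::nat. openin T (fst UV i) \<and> openin T (snd UV i)) \<and>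
      P = (\<Union>i. fst UV i - snd UV i)"
    using assms unfolding Sigma02_def by force
  then obtain UV where "\<forall>P\<in>\<P>. (\<forall>i::nat. openin T (fst (UV P) i) \<and> openin T (snd (UV P) i)) \<and>
      P = (\<Union>i. fst (UV P) i - snd (UV P) i)"
    unfolding bchoice_iff ..
  then show ?thesis
    by (intro exI[of _ "\<lambda>P. fst (UV P)"] exI[of _ "\<lambda>P. snd (UV P)"])
qed

lemma separable_metrizable_imp_second_countable:
  assumes "separable_space T" "metrizable_space T"
  shows "second_countable T"
  using assms Metric_space.separable_space_imp_second_countable
  unfolding metrizable_space_def by metis

section \<open>Balls of a quasi-metric\<close>

lemma quasi_metric_triangle:
  "\<lbrakk>quasi_metric X d; x \<in> X; y \<in> X; z \<in> X\<rbrakk> \<Longrightarrow> d x z \<le> d x y + d y z"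
  unfolding quasi_metric_def by blast

lemma quasi_metric_refl: "\<lbrakk>quasi_metric X d; x \<in> X\<rbrakk> \<Longrightarrow> d x x = 0"
  unfolding quasi_metric_def by blast

lemma quasi_metric_nonneg: "\<lbrakk>quasi_metric X d; x \<in> X; y \<in> X\<rbrakk> \<Longrightarrow> 0 \<le> d x y"
  unfolding quasi_metric_def by blast

lemma centre_in_qball: "\<lbrakk>quasi_metric X d; x \<in> X; 0 < r\<rbrakk> \<Longrightarrow> x \<in> qball X d x r"
  by (simp add: qball_def quasi_metric_refl)

lemma qball_subset_qball: "r \<le> s \<Longrightarrow> qball X d x r \<subseteq> qball X d x s"
  unfolding qball_def by auto

lemma topspace_qmtopology:
  assumes "quasi_metric X d"
  shows "topspace (qmtopology X d) = X"
proof -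
  have "X \<subseteq> \<Union>{qball X d x r |x r. x \<in> X \<and> 0 < r}"
  proof
    fix x assume "x \<in> X"
    then have "qball X d x 1 \<in> {qball X d x r |x r. x \<in> X \<and> 0 < r}"
      by (intro CollectI exI[of _ x] exI[of _ 1]) simp
    moreover have "x \<in> qball X d x 1"
      using centre_in_qball[OF assms \<open>x \<in> X\<close>, of 1] by simp
    ultimately show "x \<in> \<Union>{qball X d x r |x r. x \<in> X \<and> 0 < r}"
      by (rule UnionI)
  qed
  moreover have "\<Union>{qball X d x r |x r. x \<in> X \<and> 0 < r} \<subseteq> X"
    by (auto simp: qball_def)
  ultimately have "\<Union>{qball X d x r |x r. x \<in> X \<and> 0 < r} = X"
    by (rule antisym[rotated])
  then show ?thesis
    unfolding qmtopology_def by simp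
qed

lemma openin_qball:
  assumes "x \<in> X" "0 < r"
  shows "openin (qmtopology X d) (qball X d x r)"
  unfolding qmtopology_def openin_topology_generated_by_iff
  by (rule generate_topology_on.Basis) (use assms in auto)

lemma openin_qmtopology_qball:
  assumes qm: "quasi_metric X d" and "openin (qmtopology X d) W" and "x \<in> W"
  obtains r where "0 < r" "qball X d x r \<subseteq> W"
proof -
  have "generate_topology_on {qball X d x r |x r. x \<in> X \<and> 0 < r} W"
    using assms(2) unfolding qmtopology_def openin_topology_generated_by_iff .
  then have "\<exists>r>0. qball X d x r \<subseteq> W"
    using \<open>x \<in> W\<close>
  proof (induction arbitrary: x)
    case (Int A B)
    obtain r where "0 < r" "qball X d x r \<subseteq> A"
      using Int.IH(1) Int.prems by blast
    moreover obtain s where "0 < s" "qball X d x s \<subseteq> B"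
      using Int.IH(2) Int.prems by blast
    ultimately show ?case
      by (intro exI[of _ "min r s"]) (auto simp: qball_def)
  next
    case (UN K)
    then show ?case by blast
  next
    case (Basis S)
    then obtain c r where S: "S = qball X d c r" "c \<in> X" and x: "x \<in> X" "d c x < r"
      by (auto simp: qball_def)
    have "qball X d x (r - d c x) \<subseteq> S"
      using quasi_metric_triangle[OF qm \<open>c \<in> X\<close> x(1)] by (force simp: S qball_def)
    with x show ?case by (intro exI[of _ "r - d c x"]) auto
  qed simp
  then obtain r where "0 < r" "qball X d x r \<subseteq> W" by blast
  then show ?thesis by (rule that)
qed

definition qball_nested :: "'a set \<Rightarrow> ('a \<Rightarrow> 'a \<Rightarrow> real) \<Rightarrow> nat \<Rightarrow> 'a set \<Rightarrow> 'a set \<Rightarrow> bool" where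
  "qball_nested X d n C A \<longleftrightarrow>
     (\<exists>c\<in>X. \<exists>r>0. r \<le> inverse (real (Suc n)) \<and> qball X d c r \<subseteq> A \<and> C \<subseteq> qball X d c (r / 2))"

lemma qball_nested_subset:
  assumes "qball_nested X d n C A"
  shows "C \<subseteq> A"
proof -
  obtain c r where "0 < r" and ball: "qball X d c r \<subseteq> A" and half: "C \<subseteq> qball X d c (r / 2)"
    using assms unfolding qball_nested_def by blast
  have "qball X d c (r / 2) \<subseteq> qball X d c r"
    by (rule qball_subset_qball) (use \<open>0 < r\<close> in simp)
  with half ball show ?thesis
    by (blast intro: order_trans)
qed

lemma exists_qball_nested_base:
  assumes qm: "quasi_metric X d"
    and base: "\<And>W x. openin (qmtopology X d) W \<Longrightarrow> x \<in> W \<Longrightarrow> \<exists>B\<in>\<B>. x \<in> B \<and> B \<subseteq> W"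
    and "openin (qmtopology X d) A" "x \<in> A"
  obtains C where "C \<in> \<B>" "x \<in> C" "qball_nested X d n C A"
proof -
  obtain r0 where "0 < r0" "qball X d x r0 \<subseteq> A"
    using openin_qmtopology_qball[OF qm assms(3,4)] .
  define r where "r = min r0 (inverse (real (Suc n)))"
  have "qball X d x r \<subseteq> qball X d x r0"
    by (rule qball_subset_qball) (simp add: r_def)
  then have r: "0 < r" "r \<le> inverse (real (Suc n))" "qball X d x r \<subseteq> A"
    using \<open>0 < r0\<close> \<open>qball X d x r0 \<subseteq> A\<close> by (auto simp: r_def)
  have x: "x \<in> X"
    using assms(3,4) openin_subset topspace_qmtopology[OF qm] by blast
  have "0 < r / 2" using r(1) by simp
  then obtain C where C: "C \<in> \<B>" "x \<in> C" "C \<subseteq> qball X d x (r / 2)"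
    using base[OF openin_qball[OF x] centre_in_qball[OF qm x]] by blast
  then have "qball_nested X d n C A"
    unfolding qball_nested_def using r x by blast
  with C(1,2) show ?thesis by (rule that)
qed

section \<open>Nested balls in a complete quasi-metric space\<close>

lemma qcauchy_nested_centres:
  assumes qm: "quasi_metric X d" and cs: "\<And>k. cs k \<in> X"
    and rs: "\<And>k. rs k \<le> inverse (real (Suc k))"
    and nested: "\<And>j m. j < m \<Longrightarrow> d (cs j) (cs m) < rs j / 2"
  shows "qcauchy d cs"
  unfolding qcauchy_def
proof (intro allI impI)
  fix e :: real assume "0 < e"
  then obtain n0 where n0: "inverse (real (Suc n0)) < e"
    using reals_Archimedean by blast
  have "d (cs n) (cs m) < e" if "n0 \<le> n" "n \<le> m" for n m
  proof (cases "n = m")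
    case True
    then show ?thesis using quasi_metric_refl[OF qm cs] \<open>0 < e\<close> by simp
  next
    case False
    have "inverse (real (Suc n)) \<le> inverse (real (Suc n0))"
      using \<open>n0 \<le> n\<close> by (simp add: le_imp_inverse_le)
    then show ?thesis
      using nested[of n m] rs[of n] False \<open>n \<le> m\<close> n0 quasi_metric_nonneg[OF qm cs cs, of n m] by linarith
  qed
  then show "\<exists>n0. \<forall>n m. n0 \<le> n \<and> n \<le> m \<longrightarrow> d (cs n) (cs m) < e" by blast
qed

lemma dhat_tendsto_zeroD:
  assumes "(\<lambda>m. dhat d c (xs m)) \<longlonglongrightarrow> 0" "0 < e"
  shows "\<exists>M. \<forall>m\<ge>M. d c (xs m) < e \<and> d (xs m) c < e"
  using order_tendstoD(2)[OF assms] unfolding eventually_sequentially dhat_def by auto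

lemma limit_in_nested_qballs:
  assumes qm: "quasi_metric X d" and c: "c \<in> X" and cs: "\<And>k. cs k \<in> X"
    and lim: "(\<lambda>m. dhat d c (cs m)) \<longlonglongrightarrow> 0"
    and nested: "\<And>j m. j < m \<Longrightarrow> d (cs j) (cs m) < rs j / 2"
  shows "c \<in> qball X d (cs j) (rs j)"
proof -
  have "0 < rs j"
    using nested[of j "Suc j"] quasi_metric_nonneg[OF qm cs cs, of j "Suc j"] by simp
  then obtain M where M: "\<forall>m\<ge>M. d (cs m) c < rs j / 2"
    using dhat_tendsto_zeroD[OF lim, of "rs j / 2"] by auto
  define m where "m = max M (Suc j)"
  have "j < m" "M \<le> m" by (simp_all add: m_def)
  have "d (cs j) c \<le> d (cs j) (cs m) + d (cs m) c"
    using quasi_metric_triangle[OF qm cs cs c] .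
  also have "\<dots> < rs j"
    using nested[OF \<open>j < m\<close>] M \<open>M \<le> m\<close> by fastforce
  finally show ?thesis using c by (simp add: qball_def)
qed

lemma half_qball_subset_neighbourhood:
  assumes qm: "quasi_metric X d" and c: "c \<in> X" and cs: "\<And>k. cs k \<in> X"
    and lim: "(\<lambda>m. dhat d c (cs m)) \<longlonglongrightarrow> 0"
    and rs: "\<And>k. rs k \<le> inverse (real (Suc k))"
    and W: "openin (qmtopology X d) W" "c \<in> W"
  shows "\<exists>j. qball X d (cs j) (rs j / 2) \<subseteq> W"
proof -
  obtain e where "0 < e" and e: "qball X d c e \<subseteq> W"
    using openin_qmtopology_qball[OF qm W] .
  then obtain M where M: "\<forall>m\<ge>M. d c (cs m) < e / 2"
    using dhat_tendsto_zeroD[OF lim, of "e / 2"] by auto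
  obtain n0 where n0: "inverse (real (Suc n0)) < e"
    using reals_Archimedean \<open>0 < e\<close> by blast
  define j where "j = max M n0"
  have "inverse (real (Suc j)) \<le> inverse (real (Suc n0))"
    by (rule le_imp_inverse_le) (simp_all add: j_def)
  then have "rs j < e"
    using rs[of j] n0 by linarith
  have "qball X d (cs j) (rs j / 2) \<subseteq> qball X d c e"
  proof
    fix z assume z: "z \<in> qball X d (cs j) (rs j / 2)"
    then have "z \<in> X" by (simp add: qball_def)
    have "d c z \<le> d c (cs j) + d (cs j) z"
      using quasi_metric_triangle[OF qm c cs \<open>z \<in> X\<close>] .
    also have "\<dots> < e"
      using M[rule_format, of j] z \<open>rs j < e\<close> by (simp add: j_def qball_def)
    finally show "z \<in> qball X d c e" using \<open>z \<in> X\<close> by (simp add: qball_def)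
  qed
  with e show ?thesis by blast
qed

lemma qcomplete_nested_qballs:
  assumes qm: "quasi_metric X d" and qc: "qcomplete X d" and cs: "\<And>k. cs k \<in> X"
    and rs: "\<And>k. rs k \<le> inverse (real (Suc k))"
    and nested: "\<And>j m. j < m \<Longrightarrow> d (cs j) (cs m) < rs j / 2"
  shows "\<exists>c\<in>X. (\<forall>j. c \<in> qball X d (cs j) (rs j)) \<and>
           (\<forall>W. openin (qmtopology X d) W \<and> c \<in> W \<longrightarrow> (\<exists>j. qball X d (cs j) (rs j / 2) \<subseteq> W))"
proof -
  obtain c where c: "c \<in> X" and lim: "(\<lambda>m. dhat d c (cs m)) \<longlonglongrightarrow> 0"
    using qc qcauchy_nested_centres[OF qm cs rs nested] cs unfolding qcomplete_def by blast
  then show ?thesis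
    using limit_in_nested_qballs[OF qm c cs lim nested]
      half_qball_subset_neighbourhood[OF qm c cs lim rs] by blast
qed

lemma qcomplete_qball_nested_chain:
  assumes qm: "quasi_metric X d" and qc: "qcomplete X d"
    and nested: "\<And>k. qball_nested X d k (Ns (Suc k)) (A k)" and A: "\<And>k. A k \<subseteq> Ns k"
  shows "\<exists>c\<in>X. (\<forall>k. c \<in> A k) \<and> (\<forall>W. openin (qmtopology X d) W \<and> c \<in> W \<longrightarrow> (\<exists>k. Ns k \<subseteq> W))"
proof -
  have "\<forall>k. \<exists>c r. c \<in> X \<and> 0 < r \<and> r \<le> inverse (real (Suc k)) \<and>
      qball X d c r \<subseteq> A k \<and> Ns (Suc k) \<subseteq> qball X d c (r / 2)"
    using nested unfolding qball_nested_def by blast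
  then obtain cs rs where "\<forall>k. cs k \<in> X \<and> 0 < rs k \<and> rs k \<le> inverse (real (Suc k)) \<and>
      qball X d (cs k) (rs k) \<subseteq> A k \<and> Ns (Suc k) \<subseteq> qball X d (cs k) (rs k / 2)"
    unfolding choice_iff by blast
  then have cs: "\<And>k. cs k \<in> X" and rs: "\<And>k. 0 < rs k" "\<And>k. rs k \<le> inverse (real (Suc k))"
    and ball: "\<And>k. qball X d (cs k) (rs k) \<subseteq> A k"
    and half: "\<And>k. Ns (Suc k) \<subseteq> qball X d (cs k) (rs k / 2)"
    by blast+
  have "Ns (Suc k) \<subseteq> Ns k" for k
    using qball_nested_subset[OF nested] A by (rule order_trans)
  then have Ns_antimono: "Ns m \<subseteq> Ns k" if "k \<le> m" for k m
    using lift_Suc_antimono_le that by metis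
  have centre: "cs k \<in> Ns k" for k
    using ball A centre_in_qball[OF qm cs rs(1)] by blast
  have centres: "d (cs j) (cs m) < rs j / 2" if "j < m" for j m
    using centre[of m] Ns_antimono[of "Suc j" m] half[of j] that by (auto simp: qball_def)
  have "\<exists>c\<in>X. (\<forall>j. c \<in> qball X d (cs j) (rs j)) \<and>
           (\<forall>W. openin (qmtopology X d) W \<and> c \<in> W \<longrightarrow> (\<exists>j. qball X d (cs j) (rs j / 2) \<subseteq> W))"
    by (rule qcomplete_nested_qballs[OF qm qc cs rs(2) centres])
  then obtain c where "c \<in> X" and c: "(\<forall>j. c \<in> qball X d (cs j) (rs j)) \<and>
           (\<forall>W. openin (qmtopology X d) W \<and> c \<in> W \<longrightarrow> (\<exists>j. qball X d (cs j) (rs j / 2) \<subseteq> W))" ..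
  have "c \<in> A k" for k
    using ball[of k] c by blast
  moreover have "\<exists>k. Ns k \<subseteq> W" if "openin (qmtopology X d) W" "c \<in> W" for W
  proof -
    have "\<exists>j. qball X d (cs j) (rs j / 2) \<subseteq> W"
      using c that by simp
    then obtain j where "qball X d (cs j) (rs j / 2) \<subseteq> W" ..
    then have "Ns (Suc j) \<subseteq> W"
      using half[of j] by (rule order_trans[rotated])
    then show ?thesis ..
  qed
  ultimately show ?thesis
    using \<open>c \<in> X\<close> by blast
qed

lemma qcomplete_filter_point:
  fixes F :: "'a set \<Rightarrow> bool"
  assumes qm: "quasi_metric X d" and qc: "qcomplete X d"
    and F_mono: "\<And>A B. A \<subseteq> B \<Longrightarrow> F A \<Longrightarrow> F B"
    and F_Int: "\<And>A B. F A \<Longrightarrow> F B \<Longrightarrow> F (A \<inter> B)"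
    and "F X" "X \<in> \<N>" "X \<in> \<V>" "countable \<V>"
    and step: "\<And>N V n. N \<in> \<N> \<Longrightarrow> V \<in> \<V> \<Longrightarrow> F (N \<inter> V) \<Longrightarrow>
                 \<exists>C\<in>\<N>. qball_nested X d n C (N \<inter> V) \<and> F C"
  shows "\<exists>c\<in>X. (\<forall>V\<in>\<V>. F V \<longrightarrow> c \<in> V) \<and> (\<forall>W. openin (qmtopology X d) W \<and> c \<in> W \<longrightarrow> F W)"
proof -
  \<comment> \<open>\<open>Vs\<close> lists the members of \<open>\<V>\<close> in the filter (padded with \<open>X\<close>), so each is used at some step.\<close>
  define Vs where "Vs k = (if F (from_nat_into \<V> k) then from_nat_into \<V> k else X)" for k
  have Vs: "Vs k \<in> \<V>" "F (Vs k)" for k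
    using from_nat_into[of \<V> k] \<open>X \<in> \<V>\<close> \<open>F X\<close> by (auto simp: Vs_def)
  have "\<exists>Ns. \<forall>k. (Ns k \<in> \<N> \<and> F (Ns k)) \<and> qball_nested X d k (Ns (Suc k)) (Ns k \<inter> Vs k)"
  proof (rule dependent_nat_choice)
    show "\<exists>N. N \<in> \<N> \<and> F N"
      using \<open>X \<in> \<N>\<close> \<open>F X\<close> by blast
    fix N k assume N: "N \<in> \<N> \<and> F N"
    then have "F (N \<inter> Vs k)"
      using F_Int Vs(2) by blast
    then show "\<exists>N'. (N' \<in> \<N> \<and> F N') \<and> qball_nested X d k N' (N \<inter> Vs k)"
      using step N Vs(1) by blast
  qed
  then obtain Ns where F_Ns: "\<And>k. F (Ns k)"
    and nested: "\<And>k. qball_nested X d k (Ns (Suc k)) (Ns k \<inter> Vs k)"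
    by blast
  have "\<exists>c\<in>X. (\<forall>k. c \<in> Ns k \<inter> Vs k) \<and> (\<forall>W. openin (qmtopology X d) W \<and> c \<in> W \<longrightarrow> (\<exists>k. Ns k \<subseteq> W))"
    by (rule qcomplete_qball_nested_chain[OF qm qc nested]) blast
  then obtain c where "c \<in> X" and c: "(\<forall>k. c \<in> Ns k \<inter> Vs k) \<and>
      (\<forall>W. openin (qmtopology X d) W \<and> c \<in> W \<longrightarrow> (\<exists>k. Ns k \<subseteq> W))" ..
  have "c \<in> V" if "V \<in> \<V>" "F V" for V
  proof -
    obtain k where "from_nat_into \<V> k = V"
      using from_nat_into_surj[OF \<open>countable \<V>\<close> \<open>V \<in> \<V>\<close>] ..
    then have "Vs k = V"
      using \<open>F V\<close> by (simp add: Vs_def)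
    with c show ?thesis
      by blast
  qed
  moreover have "F W" if "openin (qmtopology X d) W" "c \<in> W" for W
  proof -
    have "\<exists>k. Ns k \<subseteq> W"
      using c that by simp
    then obtain k where "Ns k \<subseteq> W" ..
    then show ?thesis
      using F_Ns by (rule F_mono)
  qed
  ultimately show ?thesis
    using \<open>c \<in> X\<close> by blast
qed

section \<open>Extending open sets along an embedding\<close>

definition open_extension :: "'b topology \<Rightarrow> ('a \<Rightarrow> 'b) \<Rightarrow> 'a set \<Rightarrow> 'a set \<Rightarrow> 'b set" where
  "open_extension Z g X A = \<Union>{W. openin Z W \<and> {x \<in> X. g x \<in> W} \<subseteq> A}"

lemma open_extensionI:
  "\<lbrakk>openin Z W; {x \<in> X. g x \<in> W} \<subseteq> A; y \<in> W\<rbrakk> \<Longrightarrow> y \<in> open_extension Z g X A"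
  unfolding open_extension_def by (rule UnionI) simp_all

lemma open_extensionE:
  assumes "y \<in> open_extension Z g X A"
  obtains W where "openin Z W" "{x \<in> X. g x \<in> W} \<subseteq> A" "y \<in> W"
  using assms unfolding open_extension_def by blast

lemma openin_open_extension: "openin Z (open_extension Z g X A)"
  unfolding open_extension_def by (rule openin_Union) simp

lemma open_extension_subset_topspace: "open_extension Z g X A \<subseteq> topspace Z"
  by (rule openin_subset[OF openin_open_extension])

lemma open_extension_mono:
  assumes "A \<subseteq> B"
  shows "open_extension Z g X A \<subseteq> open_extension Z g X B"
proof
  fix y assume "y \<in> open_extension Z g X A"
  then obtain W where "openin Z W" "{x \<in> X. g x \<in> W} \<subseteq> A" "y \<in> W"
    by (rule open_extensionE)
  with assms show "y \<in> open_extension Z g X B"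
    by (intro open_extensionI[of Z W]) auto
qed

lemma open_extension_Int:
  "open_extension Z g X (A \<inter> B) = open_extension Z g X A \<inter> open_extension Z g X B"
proof
  show "open_extension Z g X (A \<inter> B) \<subseteq> open_extension Z g X A \<inter> open_extension Z g X B"
    by (simp add: open_extension_mono)
  show "open_extension Z g X A \<inter> open_extension Z g X B \<subseteq> open_extension Z g X (A \<inter> B)"
  proof
    fix y assume "y \<in> open_extension Z g X A \<inter> open_extension Z g X B"
    then obtain W W' where "openin Z W" "{x \<in> X. g x \<in> W} \<subseteq> A" "y \<in> W"
      "openin Z W'" "{x \<in> X. g x \<in> W'} \<subseteq> B" "y \<in> W'"
      by (auto elim!: open_extensionE)
    then show "y \<in> open_extension Z g X (A \<inter> B)"
      by (intro open_extensionI[of Z "W \<inter> W'"]) auto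
  qed
qed

lemma open_extension_carrier: "open_extension Z g X X = topspace Z"
proof (rule antisym)
  show "topspace Z \<subseteq> open_extension Z g X X"
    by (intro subsetI open_extensionI[of Z "topspace Z"]) auto
qed (rule open_extension_subset_topspace)

lemma mem_of_open_extension: "\<lbrakk>x \<in> X; g x \<in> open_extension Z g X A\<rbrakk> \<Longrightarrow> x \<in> A"
  by (auto elim: open_extensionE)

lemma embedding_map_in_open_extension:
  assumes emb: "embedding_map T Z g" and A: "openin T A" "x \<in> A"
  shows "g x \<in> open_extension Z g (topspace T) A"
proof -
  have hom: "homeomorphic_map T (subtopology Z (g ` topspace T)) g"
    using emb unfolding embedding_map_def .
  then have "openin (subtopology Z (g ` topspace T)) (g ` A)"
    using A(1) homeomorphic_imp_open_map open_map_def by blast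
  then obtain W where W: "openin Z W" "g ` A = W \<inter> g ` topspace T"
    unfolding openin_subtopology by blast
  have inj: "inj_on g (topspace T)"
    using homeomorphic_imp_injective_map[OF hom] .
  have "x' \<in> A" if "x' \<in> topspace T" "g x' \<in> W" for x'
  proof -
    have "g x' \<in> g ` A"
      using W(2) that by blast
    then obtain a where "a \<in> A" "g x' = g a"
      by blast
    moreover have "a \<in> topspace T"
      using \<open>a \<in> A\<close> openin_subset[OF A(1)] by blast
    ultimately show ?thesis
      using inj_onD[OF inj _ that(1)] by metis
  qed
  then have "{x \<in> topspace T. g x \<in> W} \<subseteq> A"
    by blast
  moreover have "g x \<in> W"
    using W(2) A(2) by blast
  ultimately show ?thesis
    by (rule open_extensionI[OF W(1)])
qed

lemma eq_if_in_open_extensions: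
  assumes "Hausdorff_space Z" and g: "continuous_map T Z g"
    and y: "y \<in> Z closure_of g ` topspace T" and c: "c \<in> topspace T"
    and ext: "\<And>A. openin T A \<Longrightarrow> c \<in> A \<Longrightarrow> y \<in> open_extension Z g (topspace T) A"
  shows "y = g c"
proof (rule ccontr)
  assume "y \<noteq> g c"
  moreover have "y \<in> topspace Z"
    by (rule subsetD[OF closure_of_subset_topspace y])
  moreover have "g c \<in> topspace Z"
    by (rule subsetD[OF continuous_map_image_subset_topspace[OF g] imageI[OF c]])
  ultimately obtain W1 W2 where W: "openin Z W1" "openin Z W2" "y \<in> W1" "g c \<in> W2" "disjnt W1 W2"
    using \<open>Hausdorff_space Z\<close> unfolding Hausdorff_space_def by metis
  define A where "A = {x \<in> topspace T. g x \<in> W2}"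
  have "openin T A"
    unfolding A_def using openin_continuous_map_preimage[OF g W(2)] .
  moreover have "c \<in> A"
    using c W(4) by (simp add: A_def)
  ultimately have "y \<in> open_extension Z g (topspace T) A"
    by (rule ext)
  then obtain W where "openin Z W" "y \<in> W" and WA: "{x \<in> topspace T. g x \<in> W} \<subseteq> A"
    by (rule open_extensionE)
  then have "openin Z (W \<inter> W1)" "y \<in> W \<inter> W1"
    using W(1,3) by auto
  then obtain x where "x \<in> topspace T" "g x \<in> W \<inter> W1"
    using y unfolding in_closure_of by blast
  then show False
    using WA W(5) by (auto simp: A_def disjnt_def)
qed

section \<open>The image of a \<open>\<Sigma>\<^sup>0\<^sub>2\<close>-refinement is \<open>G\<^sub>\<delta>\<close>\<close>

locale Sigma02_refinement =
  fixes X :: "'a set" and d :: "'a \<Rightarrow> 'a \<Rightarrow> real" and T :: "'a topology"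
    and \<B> \<P> :: "'a set set" and U V :: "'a set \<Rightarrow> nat \<Rightarrow> 'a set"
    and Z :: "'b topology" and g :: "'a \<Rightarrow> 'b"
  assumes quasi_metric: "quasi_metric X d" and qcomplete: "qcomplete X d"
    and countable_base: "countable \<B>"
    and base_open: "\<And>B. B \<in> \<B> \<Longrightarrow> openin (qmtopology X d) B"
    and base: "\<And>W x. openin (qmtopology X d) W \<Longrightarrow> x \<in> W \<Longrightarrow> \<exists>B\<in>\<B>. x \<in> B \<and> B \<subseteq> W"
    and topspace_T: "topspace T = X"
    and finer: "\<And>W. openin (qmtopology X d) W \<Longrightarrow> openin T W"
    and countable_base_T: "countable \<P>"
    and base_T_open: "\<And>P. P \<in> \<P> \<Longrightarrow> openin T P"
    and base_T: "\<And>W x. openin T W \<Longrightarrow> x \<in> W \<Longrightarrow> \<exists>P\<in>\<P>. x \<in> P \<and> P \<subseteq> W"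
    and U_open: "\<And>P i. P \<in> \<P> \<Longrightarrow> openin (qmtopology X d) (U P i)"
    and V_open: "\<And>P i. P \<in> \<P> \<Longrightarrow> openin (qmtopology X d) (V P i)"
    and Sigma02_decomposition: "\<And>P. P \<in> \<P> \<Longrightarrow> P = (\<Union>i. U P i - V P i)"
    and metrizable: "metrizable_space Z"
    and embedding: "embedding_map T Z g"
begin

abbreviation ext :: "'a set \<Rightarrow> 'b set" where
  "ext \<equiv> open_extension Z g X"

definition \<N> :: "'a set set" where
  "\<N> = insert X \<B>"

definition \<V> :: "'a set set" where
  "\<V> = insert X ((\<lambda>(P, i). V P i) ` (\<P> \<times> UNIV))"

text \<open>The shrinking-balls requirement on the filter \<open>{A. y \<in> ext A}\<close>; it makes the filter converge.\<close>

definition nested_condition :: "'a set \<Rightarrow> 'a set \<Rightarrow> nat \<Rightarrow> 'b set" where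
  "nested_condition N W n =
     (topspace Z - ext (N \<inter> W)) \<union> \<Union>{ext C | C. C \<in> \<N> \<and> qball_nested X d n C (N \<inter> W)}"

text \<open>The filter must respect the chosen \<open>\<Sigma>\<^sup>0\<^sub>2\<close>-decomposition of each basic open set of \<open>T\<close>.\<close>

definition difference_condition :: "'a set \<Rightarrow> nat \<Rightarrow> 'b set" where
  "difference_condition P i = (topspace Z - ext (U P i)) \<union> ext P \<union> ext (V P i)"

definition conditions :: "'b set set" where
  "conditions = insert (Z closure_of g ` X)
     ((\<lambda>(N, W, n). nested_condition N W n) ` (\<N> \<times> \<V> \<times> UNIV) \<union>
      (\<lambda>(P, i). difference_condition P i) ` (\<P> \<times> UNIV))"

lemma continuous_map_g: "continuous_map T Z g"
  using embedding homeomorphic_imp_continuous_map continuous_map_in_subtopology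
  unfolding embedding_map_def by blast

lemma image_subset_topspace: "g ` X \<subseteq> topspace Z"
  using continuous_map_image_subset_topspace[OF continuous_map_g] by (simp add: topspace_T)

lemma in_ext_if_openin_T: "openin T A \<Longrightarrow> x \<in> A \<Longrightarrow> g x \<in> ext A"
  using embedding_map_in_open_extension[OF embedding] by (simp add: topspace_T)

lemma openin_\<N>_Int_\<V>:
  assumes "N \<in> \<N>" "W \<in> \<V>"
  shows "openin (qmtopology X d) (N \<inter> W)"
proof -
  have "openin (qmtopology X d) X"
    using openin_topspace[of "qmtopology X d"] by (simp add: topspace_qmtopology[OF quasi_metric])
  then show ?thesis
    using assms base_open V_open unfolding \<N>_def \<V>_def by (auto intro!: openin_Int)
qed

lemma gdelta_in_Inter_conditions: "gdelta_in Z (\<Inter>conditions)"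
proof (rule gdelta_in_Inter)
  have closed: "closedin Z (topspace Z - ext A)" for A
    by (rule closedin_diff[OF closedin_topspace openin_open_extension])
  have "openin Z (\<Union>{ext C | C. C \<in> \<N> \<and> qball_nested X d n C A})" for n A
    by (rule openin_Union) (auto simp: openin_open_extension)
  then have "gdelta_in Z (nested_condition N W n)" for N W n
    unfolding nested_condition_def
    by (intro gdelta_in_Un closed_imp_gdelta_in[OF metrizable closed] open_imp_gdelta_in)
  moreover have "gdelta_in Z (difference_condition P i)" for P i
    unfolding difference_condition_def
    by (intro gdelta_in_Un closed_imp_gdelta_in[OF metrizable closed] open_imp_gdelta_in
        openin_open_extension)
  moreover have "gdelta_in Z (Z closure_of g ` X)"
    by (rule closed_imp_gdelta_in[OF metrizable closedin_closure_of])
  ultimately show "gdelta_in Z S" if "S \<in> conditions" for S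
    using that unfolding conditions_def by auto
  show "countable conditions"
    unfolding conditions_def \<N>_def \<V>_def
    by (intro countable_insert countable_Un countable_image countable_SIGMA countable_base
        countable_base_T countableI_type)
qed (simp add: conditions_def)

lemma image_in_nested_condition:
  assumes "x \<in> X" "N \<in> \<N>" "W \<in> \<V>"
  shows "g x \<in> nested_condition N W n"
proof (cases "g x \<in> ext (N \<inter> W)")
  case True
  then have "x \<in> N \<inter> W"
    by (rule mem_of_open_extension[OF \<open>x \<in> X\<close>])
  then obtain C where "C \<in> \<B>" "x \<in> C" "qball_nested X d n C (N \<inter> W)"
    using exists_qball_nested_base[OF quasi_metric base openin_\<N>_Int_\<V>[OF assms(2,3)]] by blast
  moreover from this have "g x \<in> ext C"
    using in_ext_if_openin_T[OF finer[OF base_open]] by blast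
  ultimately show ?thesis
    unfolding nested_condition_def \<N>_def by blast
next
  case False
  then show ?thesis
    using image_subset_topspace \<open>x \<in> X\<close> unfolding nested_condition_def by blast
qed

lemma image_in_difference_condition:
  assumes "x \<in> X" "P \<in> \<P>"
  shows "g x \<in> difference_condition P i"
proof -
  have "g x \<in> topspace Z"
    using image_subset_topspace \<open>x \<in> X\<close> by blast
  moreover have "g x \<in> ext P \<union> ext (V P i)" if "g x \<in> ext (U P i)"
  proof (cases "x \<in> V P i")
    case True
    then show ?thesis
      using in_ext_if_openin_T[OF finer[OF V_open[OF \<open>P \<in> \<P>\<close>]]] by blast
  next
    case False
    have "x \<in> U P i"
      using mem_of_open_extension[OF \<open>x \<in> X\<close> that] .
    with False have "x \<in> P"
      using Sigma02_decomposition[OF \<open>P \<in> \<P>\<close>] by blast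
    then show ?thesis
      using in_ext_if_openin_T[OF base_T_open[OF \<open>P \<in> \<P>\<close>]] by blast
  qed
  ultimately show ?thesis
    unfolding difference_condition_def by blast
qed

lemma image_subset_Inter_conditions: "g ` X \<subseteq> \<Inter>conditions"
proof (intro subsetI InterI)
  fix y S assume "y \<in> g ` X" "S \<in> conditions"
  then obtain x where "x \<in> X" "y = g x"
    by blast
  moreover have "g ` X \<subseteq> Z closure_of g ` X"
    by (rule closure_of_subset[OF image_subset_topspace])
  ultimately show "y \<in> S"
    using \<open>S \<in> conditions\<close> image_in_nested_condition image_in_difference_condition
    unfolding conditions_def by auto
qed

lemma Inter_conditions_subset_closure: "\<Inter>conditions \<subseteq> Z closure_of g ` X"
  unfolding conditions_def by blast

lemma filter_point_of_Inter_conditions: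
  assumes y: "y \<in> \<Inter>conditions"
  shows "\<exists>c\<in>X. (\<forall>W\<in>\<V>. y \<in> ext W \<longrightarrow> c \<in> W) \<and>
           (\<forall>W. openin (qmtopology X d) W \<and> c \<in> W \<longrightarrow> y \<in> ext W)"
proof -
  have "y \<in> topspace Z"
    using subsetD[OF closure_of_subset_topspace subsetD[OF Inter_conditions_subset_closure y]] .
  then have carrier: "y \<in> ext X"
    by (simp add: open_extension_carrier)
  have mono: "y \<in> ext B" if "A \<subseteq> B" "y \<in> ext A" for A B
    by (rule subsetD[OF open_extension_mono[OF that(1)] that(2)])
  have Int: "y \<in> ext (A \<inter> B)" if "y \<in> ext A" "y \<in> ext B" for A B
    using that by (simp add: open_extension_Int)
  have X: "X \<in> \<N>" "X \<in> \<V>" and "countable \<V>"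
    unfolding \<N>_def \<V>_def using countable_base_T by auto
  have step: "\<exists>C\<in>\<N>. qball_nested X d n C (N \<inter> W) \<and> y \<in> ext C"
    if "N \<in> \<N>" "W \<in> \<V>" "y \<in> ext (N \<inter> W)" for N W n
  proof -
    have "nested_condition N W n \<in> conditions"
      unfolding conditions_def using that(1,2) by auto
    then have "y \<in> nested_condition N W n"
      using y by blast
    with that(3) show ?thesis
      unfolding nested_condition_def by blast
  qed
  show ?thesis
    using qcomplete_filter_point[OF quasi_metric qcomplete, where F = "\<lambda>A. y \<in> ext A",
        OF mono Int carrier X \<open>countable \<V>\<close> step] .
qed

lemma in_ext_if_difference_conditions:
  assumes diff: "\<And>P i. P \<in> \<P> \<Longrightarrow> y \<in> difference_condition P i"
    and c_\<V>: "\<forall>W\<in>\<V>. y \<in> ext W \<longrightarrow> c \<in> W"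
    and c_open: "\<forall>W. openin (qmtopology X d) W \<and> c \<in> W \<longrightarrow> y \<in> ext W"
    and A: "openin T A" "c \<in> A"
  shows "y \<in> ext A"
proof -
  obtain P where P: "P \<in> \<P>" "c \<in> P" "P \<subseteq> A"
    using base_T[OF A] by blast
  then obtain i where "c \<in> U P i" "c \<notin> V P i"
    using Sigma02_decomposition by blast
  have "y \<in> ext (U P i)"
    using c_open U_open[OF P(1)] \<open>c \<in> U P i\<close> by blast
  moreover have "V P i \<in> \<V>"
    unfolding \<V>_def using P(1) by auto
  then have "y \<notin> ext (V P i)"
    using c_\<V> \<open>c \<notin> V P i\<close> by blast
  ultimately have "y \<in> ext P"
    using diff[OF P(1), of i] unfolding difference_condition_def by blast
  then show ?thesis
    by (rule subsetD[OF open_extension_mono[OF P(3)]])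
qed

lemma Inter_conditions_subset_image: "\<Inter>conditions \<subseteq> g ` X"
proof
  fix y assume y: "y \<in> \<Inter>conditions"
  then obtain c where "c \<in> X" and c: "(\<forall>W\<in>\<V>. y \<in> ext W \<longrightarrow> c \<in> W) \<and>
           (\<forall>W. openin (qmtopology X d) W \<and> c \<in> W \<longrightarrow> y \<in> ext W)"
    using filter_point_of_Inter_conditions by blast
  have diff: "y \<in> difference_condition P i" if "P \<in> \<P>" for P i
  proof -
    have "difference_condition P i \<in> conditions"
      unfolding conditions_def using that by auto
    then show ?thesis
      using y by blast
  qed
  have "y = g c"
  proof (rule eq_if_in_open_extensions[OF metrizable_imp_Hausdorff_space[OF metrizable] continuous_map_g])
    show "y \<in> Z closure_of g ` topspace T"
      using y Inter_conditions_subset_closure by (auto simp: topspace_T)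
    show "c \<in> topspace T"
      using \<open>c \<in> X\<close> by (simp add: topspace_T)
    show "y \<in> open_extension Z g (topspace T) A" if "openin T A" "c \<in> A" for A
      using in_ext_if_difference_conditions[OF diff c[THEN conjunct1] c[THEN conjunct2] that]
      by (simp add: topspace_T)
  qed
  with \<open>c \<in> X\<close> show "y \<in> g ` X"
    by blast
qed

lemma gdelta_in_image: "gdelta_in Z (g ` X)"
proof -
  have "\<Inter>conditions = g ` X"
    using image_subset_Inter_conditions Inter_conditions_subset_image by (rule antisym[rotated])
  then show ?thesis
    using gdelta_in_Inter_conditions by simp
qed

end

lemma gdelta_in_embedding_image:
  assumes qm: "quasi_metric X d" and qc: "qcomplete X d"
    and "second_countable (qmtopology X d)" and "second_countable T" and T: "topspace T = X"
    and finer: "\<And>W. openin (qmtopology X d) W \<Longrightarrow> openin T W"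
    and Sigma02: "\<And>W. openin T W \<Longrightarrow> W \<in> Sigma02 (qmtopology X d)"
    and "metrizable_space Z" and "embedding_map T Z g"
  shows "gdelta_in Z (g ` X)"
proof -
  from \<open>second_countable (qmtopology X d)\<close> obtain \<B> where \<B>: "countable \<B> \<and>
      (\<forall>B\<in>\<B>. openin (qmtopology X d) B) \<and>
      (\<forall>W x. openin (qmtopology X d) W \<and> x \<in> W \<longrightarrow> (\<exists>B\<in>\<B>. x \<in> B \<and> B \<subseteq> W))"
    unfolding second_countable_def ..
  from \<open>second_countable T\<close> obtain \<P> where \<P>: "countable \<P> \<and> (\<forall>P\<in>\<P>. openin T P) \<and>
      (\<forall>W x. openin T W \<and> x \<in> W \<longrightarrow> (\<exists>P\<in>\<P>. x \<in> P \<and> P \<subseteq> W))"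
    unfolding second_countable_def ..
  have "\<forall>P\<in>\<P>. P \<in> Sigma02 (qmtopology X d)"
    using \<P> by (simp add: Sigma02)
  then obtain U :: "'a set \<Rightarrow> nat \<Rightarrow> 'a set" where "\<exists>V. \<forall>P\<in>\<P>.
      (\<forall>i. openin (qmtopology X d) (U P i) \<and> openin (qmtopology X d) (V P i)) \<and> P = (\<Union>i. U P i - V P i)"
    by (rule Sigma02_choice[THEN exE])
  then obtain V where UV: "\<forall>P\<in>\<P>.
      (\<forall>i. openin (qmtopology X d) (U P i) \<and> openin (qmtopology X d) (V P i)) \<and> P = (\<Union>i. U P i - V P i)" ..
  interpret Sigma02_refinement X d T \<B> \<P> U V Z g
  proof
    show "countable \<B>" "countable \<P>"
      using \<B> \<P> by simp_all
    show "openin (qmtopology X d) B" if "B \<in> \<B>" for B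
      using \<B> that by simp
    show "\<exists>B\<in>\<B>. x \<in> B \<and> B \<subseteq> W" if "openin (qmtopology X d) W" "x \<in> W" for W x
      using \<B>[THEN conjunct2, THEN conjunct2, rule_format, OF conjI, OF that] .
    show "openin T P" if "P \<in> \<P>" for P
      using \<P> that by simp
    show "\<exists>P\<in>\<P>. x \<in> P \<and> P \<subseteq> W" if "openin T W" "x \<in> W" for W x
      using \<P>[THEN conjunct2, THEN conjunct2, rule_format, OF conjI, OF that] .
    show "openin (qmtopology X d) (U P i)" "openin (qmtopology X d) (V P i)" if "P \<in> \<P>" for P i
      using UV that by simp_all
    show "P = (\<Union>i. U P i - V P i)" if "P \<in> \<P>" for P
      using UV that by simp
  qed (fact qm qc T finer \<open>metrizable_space Z\<close> \<open>embedding_map T Z g\<close>)+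
  show ?thesis
    by (rule gdelta_in_image)
qed

theorem theorem75:
  fixes \<tau> \<tau>' :: "'a topology" and X :: "'a set"
  assumes "topspace \<tau> = X" and "topspace \<tau>' = X"
    and "quasi_Polish \<tau>"
    and "separable_space \<tau>'" and "metrizable_space \<tau>'"
    and "\<And>U. openin \<tau> U \<Longrightarrow> openin \<tau>' U"
    and "\<And>U. openin \<tau>' U \<Longrightarrow> U \<in> Sigma02 \<tau>"
  shows "Polish_space \<tau>'"
proof -
  obtain d where qm: "quasi_metric X d" and qc: "qcomplete X d" and \<tau>: "\<tau> = qmtopology X d"
    and "second_countable \<tau>"
    using assms(1,3) unfolding quasi_Polish_def by auto
  obtain g :: "'a \<Rightarrow> 'a \<Rightarrow> real" and Z where Z: "completely_metrizable_space Z" "embedding_map \<tau>' Z g"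
    using metrizable_space_completion[OF assms(5)] by blast
  have "gdelta_in Z (g ` X)"
    using gdelta_in_embedding_image[OF qm qc _ separable_metrizable_imp_second_countable[OF assms(4,5)]
        assms(2) _ _ completely_metrizable_imp_metrizable_space[OF Z(1)] Z(2)]
      \<open>second_countable \<tau>\<close> assms(6,7) by (simp add: \<tau>)
  then have "completely_metrizable_space (subtopology Z (g ` topspace \<tau>'))"
    using Z(1) assms(2) by (simp add: completely_metrizable_space_gdelta_in)
  then have "completely_metrizable_space \<tau>'"
    using homeomorphic_completely_metrizable_space embedding_map_imp_homeomorphic_space[OF Z(2)] by blast
  with assms(4) show ?thesis
    unfolding Polish_space_def ..
qed

end
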